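(* Let $T$ be the triangle, a linear map $1\to1$ with matrix $\begin{pmatrix}1&1\\0&1\end{pmatrix}$. For $\lambda\in\mathbb{Z}[\tfrac12]$ with $\lambda\ge0$, let $L_\lambda$ be the lambda box, a linear map $1\to1$ with matrix $\begin{pmatrix}1&0\\0&\lambda\end{pmatrix}$. Then $T$ is expressible by a diagram of the $\frac{\pi}{4}$-fragment ZX-calculus, that is, there is such a diagram whose standard interpretation equals the matrix of $T$. Likewise, for every $\lambda\in\mathbb{Z}[\tfrac12]$ with $\lambda\ge 0$, $L_\lambda$ is expressible by a diagram of the $\frac{\pi}{4}$-fragment ZX-calculus.
   Context: The $\frac{\pi}{4}$-fragment ZX-calculus is built as follows. Its diagrams are generated from the generators below, using sequential composition $\circ$ and parallel composition (tensor) $\otimes$. The generators and their standard interpretations $\llbracket\cdot\rrbracket$ as complex matrices are: - the green spider $R_Z^{(n,m)}:n\to m$, with $\llbracket R_Z^{(n,m)}\rrbracket=|0\rangle^{\otimes m}\langle 0|^{\otimes n}+|1\rangle^{\otimes m}\langle 1|^{\otimes n}$; - the green phase $A_\alpha:1\to1$ for $\alpha\in\{\frac{k\pi}{4}:k=0,\dots,7\}$, with $\llbracket A_\alpha\rrbracket=|0\rangle\langle0|+e^{i\alpha}|1\rangle\langle1|$; - the Hadamard gate $H:1\to 1$, with $\llbracket H\rrbracket=\frac1{\sqrt2}\begin{pmatrix}1&1\\1&-1\end{pmatrix}$; - the swap $2\to2$; - the identity $1\to1$; - the empty diagram $0\to0$, interpreted as the scalar $1$; - the cap $0\to2$, with interpretation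 $|00\rangle+|11\rangle$; - the cup $2\to0$, with interpretation $\langle00|+\langle11|$. The interpretation is extended by matrix product for $\circ$ and Kronecker product for $\otimes$. The triangle and the lambda box are not among these generators. *)

theory Defs
  imports Complex_Main
begin

text \<open>A diagram n -> m is interpreted as a
  2^m x 2^n complex matrix, represented as a function on row/column indices
  (rows i < 2^m, columns j < 2^n); basis states are indexed big-endian, so that
  the tensor product is the Kronecker product.\<close>

datatype zx =
    Spider nat nat          (* green spider R_Z^(n,m) : n -> m *)
  | Phase nat              (* green phase A_(k pi/4), k taken mod 8 : 1 -> 1 *)
  | Had
  | Swap
  | Id1
  | Empty
  | Cap
  | Cup
  | Comp zx zx             (* Comp f g = f \<circ> g : first g, then f *)
  | Tens zx zx

fun zx_dom :: "zx \<Rightarrow> nat" where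
  "zx_dom (Spider n m) = n"
| "zx_dom (Phase k) = 1"
| "zx_dom Had = 1"
| "zx_dom Swap = 2"
| "zx_dom Id1 = 1"
| "zx_dom Empty = 0"
| "zx_dom Cap = 0"
| "zx_dom Cup = 2"
| "zx_dom (Comp f g) = zx_dom g"
| "zx_dom (Tens f g) = zx_dom f + zx_dom g"

fun zx_cod :: "zx \<Rightarrow> nat" where
  "zx_cod (Spider n m) = m"
| "zx_cod (Phase k) = 1"
| "zx_cod Had = 1"
| "zx_cod Swap = 2"
| "zx_cod Id1 = 1"
| "zx_cod Empty = 0"
| "zx_cod Cap = 2"
| "zx_cod Cup = 0"
| "zx_cod (Comp f g) = zx_cod f"
| "zx_cod (Tens f g) = zx_cod f + zx_cod g"

fun zx_wf :: "zx \<Rightarrow> bool" where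
  "zx_wf (Comp f g) = (zx_wf f \<and> zx_wf g \<and> zx_dom f = zx_cod g)"
| "zx_wf (Tens f g) = (zx_wf f \<and> zx_wf g)"
| "zx_wf _ = True"

fun zx_interp :: "zx \<Rightarrow> nat \<Rightarrow> nat \<Rightarrow> complex" where
  "zx_interp (Spider n m) i j =
     (if i = 0 \<and> j = 0 then 1 else 0) + (if i = 2^m - 1 \<and> j = 2^n - 1 then 1 else 0)"
| "zx_interp (Phase k) i j =
     (if i = 0 \<and> j = 0 then 1
      else if i = 1 \<and> j = 1 then cis (real (k mod 8) * pi / 4) else 0)"
| "zx_interp Had i j =
     (if i = 1 \<and> j = 1 then - 1 / complex_of_real (sqrt 2) else 1 / complex_of_real (sqrt 2))"
| "zx_interp Swap i j = (if i = 2 * (j mod 2) + j div 2 then 1 else 0)"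
| "zx_interp Id1 i j = (if i = j then 1 else 0)"
| "zx_interp Empty i j = 1"
| "zx_interp Cap i j = (if i = 0 \<or> i = 3 then 1 else 0)"
| "zx_interp Cup i j = (if j = 0 \<or> j = 3 then 1 else 0)"
| "zx_interp (Comp f g) i j =
     (\<Sum>k<2 ^ zx_cod g. zx_interp f i k * zx_interp g k j)"
| "zx_interp (Tens f g) i j =
     zx_interp f (i div 2 ^ zx_cod g) (j div 2 ^ zx_dom g) *
     zx_interp g (i mod 2 ^ zx_cod g) (j mod 2 ^ zx_dom g)"

definition zx_expressible_1_1 :: "(nat \<Rightarrow> nat \<Rightarrow> complex) \<Rightarrow> bool" where
  "zx_expressible_1_1 M \<longleftrightarrow>
     (\<exists>D. zx_wf D \<and> zx_dom D = 1 \<and> zx_cod D = 1 \<and>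
          (\<forall>i<2. \<forall>j<2. zx_interp D i j = M i j))"

definition triangle_mat :: "nat \<Rightarrow> nat \<Rightarrow> complex" where
  "triangle_mat i j = (if i = 1 \<and> j = 0 then 0 else if i \<le> 1 \<and> j \<le> 1 then 1 else 0)"

definition lambda_box_mat :: "complex \<Rightarrow> nat \<Rightarrow> nat \<Rightarrow> complex" where
  "lambda_box_mat l i j = (if i = 0 \<and> j = 0 then 1 else if i = 1 \<and> j = 1 then l else 0)"

end

theory Submission imports Defs begin

text \<open>A state with amplitudes (x, y), plugged into one input of the green spider 2 -> 1,
  yields the diagonal map diag(x, y); so a lambda box only needs the state (1, lambda).
  Starting from (1, 0) = H|+> / sqrt 2, the lower triangle X T X maps (1, n) to (1, n + 1),
  and diag(1, 1/2), obtained from the state T|+> / 2 = (1, 1/2), halves the second amplitude;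
  this reaches every (1, a / 2^k).  The triangle T itself is sqrt 2 times K H S K, where
  S is the pi/2 phase and K = (1/sqrt 2) [[1, 1], [1, -i]] = P H D H P with P the 7 pi/4
  phase and D the diagonal map of the state H P'|+>, P' the pi/4 phase.  The scalar 1/sqrt 2
  is the sum of the entries of the entrywise cube of H.\<close>

definition zx_matrix :: "zx \<Rightarrow> complex \<Rightarrow> complex \<Rightarrow> complex \<Rightarrow> complex \<Rightarrow> bool" where
  "zx_matrix D a b c d \<longleftrightarrow> zx_wf D \<and> zx_dom D = 1 \<and> zx_cod D = 1 \<and>
     zx_interp D 0 0 = a \<and> zx_interp D 0 1 = b \<and> zx_interp D 1 0 = c \<and> zx_interp D 1 1 = d"

definition zx_state :: "zx \<Rightarrow> complex \<Rightarrow> complex \<Rightarrow> bool" where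
  "zx_state D x y \<longleftrightarrow> zx_wf D \<and> zx_dom D = 0 \<and> zx_cod D = 1 \<and>
     zx_interp D 0 0 = x \<and> zx_interp D 1 0 = y"

definition zx_scalar :: "zx \<Rightarrow> complex \<Rightarrow> bool" where
  "zx_scalar D s \<longleftrightarrow> zx_wf D \<and> zx_dom D = 0 \<and> zx_cod D = 0 \<and> zx_interp D 0 0 = s"

lemma zx_expressible_1_1I:
  assumes "zx_matrix D (M 0 0) (M 0 1) (M 1 0) (M 1 1)"
  shows "zx_expressible_1_1 M"
  using assms unfolding zx_expressible_1_1_def zx_matrix_def
  by (auto simp: less_2_cases_iff)

lemma zx_matrix_Comp:
  "zx_matrix f a b c d \<Longrightarrow> zx_matrix g a' b' c' d' \<Longrightarrow>
   zx_matrix (Comp f g) (a*a' + b*c') (a*b' + b*d') (c*a' + d*c') (c*b' + d*d')"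
  by (simp add: zx_matrix_def lessThan_nat_numeral)

lemma zx_state_Comp:
  "zx_matrix f a b c d \<Longrightarrow> zx_state g x y \<Longrightarrow> zx_state (Comp f g) (a*x + b*y) (c*x + d*y)"
  by (simp add: zx_matrix_def zx_state_def lessThan_nat_numeral)

lemma zx_scalar_counit:
  "zx_state g x y \<Longrightarrow> zx_scalar (Comp (Spider 1 0) g) (x + y)"
  by (simp add: zx_scalar_def zx_state_def lessThan_nat_numeral)

definition diag_of_state :: "zx \<Rightarrow> zx" where
  "diag_of_state g = Comp (Spider 2 1) (Tens Id1 g)"

lemma zx_matrix_diag_of_state:
  "zx_state g x y \<Longrightarrow> zx_matrix (diag_of_state g) x 0 0 y"
  by (simp add: diag_of_state_def zx_matrix_def zx_state_def lessThan_nat_numeral)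

definition entrywise_mult :: "zx \<Rightarrow> zx \<Rightarrow> zx" where
  "entrywise_mult f g = Comp (Spider 2 1) (Comp (Tens f g) (Spider 1 2))"

lemma zx_matrix_entrywise_mult:
  "zx_matrix f a b c d \<Longrightarrow> zx_matrix g a' b' c' d' \<Longrightarrow>
   zx_matrix (entrywise_mult f g) (a*a') (b*b') (c*c') (d*d')"
  by (simp add: entrywise_mult_def zx_matrix_def lessThan_nat_numeral)

lemma zx_matrix_Tens_scalar:
  "zx_matrix f a b c d \<Longrightarrow> zx_scalar s v \<Longrightarrow> zx_matrix (Tens f s) (a*v) (b*v) (c*v) (d*v)"
  by (simp add: zx_matrix_def zx_scalar_def)

lemma zx_state_Tens_scalar:
  "zx_state f x y \<Longrightarrow> zx_scalar s v \<Longrightarrow> zx_state (Tens f s) (x*v) (y*v)"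
  by (simp add: zx_state_def zx_scalar_def)

definition inv_sqrt2 :: complex where
  "inv_sqrt2 = 1 / complex_of_real (sqrt 2)"

lemma inv_sqrt2_squared: "inv_sqrt2 * inv_sqrt2 = 1/2"
  unfolding inv_sqrt2_def by (simp flip: of_real_mult)

lemma inv_sqrt2_squared_mult: "inv_sqrt2 * (inv_sqrt2 * x) = x / 2"
  by (simp add: mult.assoc[symmetric] inv_sqrt2_squared)

lemma zx_state_unit: "zx_state (Spider 0 1) 1 1"
  by (simp add: zx_state_def)

lemma zx_matrix_Had: "zx_matrix Had inv_sqrt2 inv_sqrt2 inv_sqrt2 (- inv_sqrt2)"
  by (simp add: zx_matrix_def inv_sqrt2_def)

lemma cis_quarter_pi: "cis (pi / 4) = (1 + \<i>) * inv_sqrt2"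
  by (simp add: cis.ctr cos_45 sin_45 inv_sqrt2_def complex_eq_iff field_simps)

lemma cis_seven_quarter_pi: "cis (7 * pi / 4) = (1 - \<i>) * inv_sqrt2"
proof -
  have "cis (7 * pi / 4) = cis (2 * pi - pi / 4)"
    by (rule arg_cong[of _ _ cis]) simp
  also have "\<dots> = Complex (sqrt 2 / 2) (- (sqrt 2 / 2))"
    unfolding cis.ctr cos_2pi_minus sin_2pi_minus cos_45 sin_45 ..
  also have "\<dots> = (1 - \<i>) * inv_sqrt2"
    by (simp add: inv_sqrt2_def complex_eq_iff field_simps)
  finally show ?thesis .
qed

lemma zx_matrix_Phase_1: "zx_matrix (Phase 1) 1 0 0 ((1 + \<i>) * inv_sqrt2)"
  by (simp add: zx_matrix_def cis_quarter_pi)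

lemma zx_matrix_Phase_2: "zx_matrix (Phase 2) 1 0 0 \<i>"
  by (simp add: zx_matrix_def)

lemma zx_matrix_Phase_4: "zx_matrix (Phase 4) 1 0 0 (-1)"
  by (simp add: zx_matrix_def)

lemma zx_matrix_Phase_7: "zx_matrix (Phase 7) 1 0 0 ((1 - \<i>) * inv_sqrt2)"
  by (simp add: zx_matrix_def cis_seven_quarter_pi)

definition gate_K :: zx where
  "gate_K = Comp (Phase 7) (Comp Had (Comp
     (diag_of_state (Comp Had (Comp (Phase 1) (Spider 0 1)))) (Comp Had (Phase 7))))"

lemma zx_matrix_gate_K: "zx_matrix gate_K inv_sqrt2 inv_sqrt2 inv_sqrt2 (- \<i> * inv_sqrt2)"
proof -
  have "zx_state (Comp Had (Comp (Phase 1) (Spider 0 1)))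
          (inv_sqrt2 + (1 + \<i>) / 2) (inv_sqrt2 - (1 + \<i>) / 2)"
    using zx_state_Comp[OF zx_matrix_Had zx_state_Comp[OF zx_matrix_Phase_1 zx_state_unit]]
    by (simp add: algebra_simps inv_sqrt2_squared inv_sqrt2_squared_mult add_divide_distrib)
  from zx_matrix_Comp[OF zx_matrix_Phase_7 zx_matrix_Comp[OF zx_matrix_Had
        zx_matrix_Comp[OF zx_matrix_diag_of_state[OF this]
        zx_matrix_Comp[OF zx_matrix_Had zx_matrix_Phase_7]]]]
  show ?thesis
    unfolding gate_K_def
    by (simp add: algebra_simps inv_sqrt2_squared inv_sqrt2_squared_mult
        add_divide_distrib diff_divide_distrib)
qed

definition scalar_sqrt2 :: zx where
  "scalar_sqrt2 = Comp (Spider 1 0) (Comp Had (Spider 0 1))"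

lemma zx_scalar_sqrt2: "zx_scalar scalar_sqrt2 (2 * inv_sqrt2)"
  using zx_scalar_counit[OF zx_state_Comp[OF zx_matrix_Had zx_state_unit]]
  unfolding scalar_sqrt2_def by simp

definition triangle :: zx where
  "triangle = Tens (Comp gate_K (Comp Had (Comp (Phase 2) gate_K))) scalar_sqrt2"

lemma zx_matrix_triangle: "zx_matrix triangle 1 1 0 1"
  using zx_matrix_Tens_scalar[OF zx_matrix_Comp[OF zx_matrix_gate_K
          zx_matrix_Comp[OF zx_matrix_Had zx_matrix_Comp[OF zx_matrix_Phase_2 zx_matrix_gate_K]]]
          zx_scalar_sqrt2]
  unfolding triangle_def
  by (simp add: algebra_simps inv_sqrt2_squared inv_sqrt2_squared_mult
      add_divide_distrib diff_divide_distrib)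

definition scalar_inv_sqrt2 :: zx where
  "scalar_inv_sqrt2 =
     Comp (Spider 1 0) (Comp (entrywise_mult Had (entrywise_mult Had Had)) (Spider 0 1))"

lemma zx_scalar_inv_sqrt2: "zx_scalar scalar_inv_sqrt2 inv_sqrt2"
  using zx_scalar_counit[OF zx_state_Comp[OF zx_matrix_entrywise_mult[OF zx_matrix_Had
          zx_matrix_entrywise_mult[OF zx_matrix_Had zx_matrix_Had]] zx_state_unit]]
  unfolding scalar_inv_sqrt2_def
  by (simp add: algebra_simps inv_sqrt2_squared inv_sqrt2_squared_mult)

definition state_zero :: zx where
  "state_zero = Tens (Comp Had (Spider 0 1)) scalar_inv_sqrt2"

lemma zx_state_zero: "zx_state state_zero 1 0"
  using zx_state_Tens_scalar[OF zx_state_Comp[OF zx_matrix_Had zx_state_unit] zx_scalar_inv_sqrt2]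
  unfolding state_zero_def
  by (simp add: algebra_simps inv_sqrt2_squared_mult)

definition pauli_X :: zx where
  "pauli_X = Comp Had (Comp (Phase 4) Had)"

lemma zx_matrix_pauli_X: "zx_matrix pauli_X 0 1 1 0"
  using zx_matrix_Comp[OF zx_matrix_Had zx_matrix_Comp[OF zx_matrix_Phase_4 zx_matrix_Had]]
  unfolding pauli_X_def
  by (simp add: algebra_simps inv_sqrt2_squared)

definition lower_triangle :: zx where
  "lower_triangle = Comp pauli_X (Comp triangle pauli_X)"

lemma zx_matrix_lower_triangle: "zx_matrix lower_triangle 1 0 1 1"
  using zx_matrix_Comp[OF zx_matrix_pauli_X zx_matrix_Comp[OF zx_matrix_triangle zx_matrix_pauli_X]]
  unfolding lower_triangle_def by simp

definition halving :: zx where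
  "halving = diag_of_state
     (Tens (Tens (Comp triangle (Spider 0 1)) scalar_inv_sqrt2) scalar_inv_sqrt2)"

lemma zx_matrix_halving: "zx_matrix halving 1 0 0 (1/2)"
  using zx_matrix_diag_of_state[OF zx_state_Tens_scalar[OF zx_state_Tens_scalar[OF
          zx_state_Comp[OF zx_matrix_triangle zx_state_unit] zx_scalar_inv_sqrt2] zx_scalar_inv_sqrt2]]
  unfolding halving_def
  by (simp add: algebra_simps inv_sqrt2_squared inv_sqrt2_squared_mult)

definition state_dyadic :: "nat \<Rightarrow> nat \<Rightarrow> zx" where
  "state_dyadic a k = (Comp halving ^^ k) ((Comp lower_triangle ^^ a) state_zero)"

lemma zx_state_integer: "zx_state ((Comp lower_triangle ^^ n) state_zero) 1 (of_nat n)"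
proof (induction n)
  case 0
  show ?case using zx_state_zero by simp
next
  case (Suc n)
  show ?case using zx_state_Comp[OF zx_matrix_lower_triangle Suc.IH] by simp
qed

lemma zx_state_dyadic: "zx_state (state_dyadic a k) 1 (of_nat a / 2 ^ k)"
  unfolding state_dyadic_def
proof (induction k)
  case 0
  show ?case using zx_state_integer by simp
next
  case (Suc k)
  show ?case
    using zx_state_Comp[OF zx_matrix_halving Suc.IH]
    by (simp add: divide_divide_eq_left mult.commute)
qed

theorem mainTheorem2:
  shows "zx_expressible_1_1 triangle_mat \<and>
         (\<forall>(a::int) (k::nat). a \<ge> 0 \<longrightarrow>
            zx_expressible_1_1 (lambda_box_mat (of_real (of_int a / 2 ^ k))))"
proof (intro conjI allI impI)
  show "zx_expressible_1_1 triangle_mat"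
    by (rule zx_expressible_1_1I) (use zx_matrix_triangle in \<open>simp add: triangle_mat_def\<close>)
  fix a :: int and k :: nat
  assume "a \<ge> 0"
  then have "(of_real (of_int a / 2 ^ k) :: complex) = of_nat (nat a) / 2 ^ k"
    by simp
  then show "zx_expressible_1_1 (lambda_box_mat (of_real (of_int a / 2 ^ k)))"
    using zx_matrix_diag_of_state[OF zx_state_dyadic[of "nat a" k]]
    by (intro zx_expressible_1_1I) (simp add: lambda_box_mat_def)
qed

end
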